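(* If $d_1-p_1\ge d_2-p_2\ge\cdots\ge d_n-p_n$, then first-fit (equivalently next-fit) satisfies $FF(I)<2\,OPT(I)$ for every such instance $I$ with $OPT(I)\ge 2$ (and $FF(I)=1$ when $OPT(I)=1$); in particular first-fit is a 2-approximation on this class. The bound is tight: for every integer $k\ge1$ there is an instance of this class with $OPT(I)=k+1$ and $FF(I)=2k+1$, namely the instance with $3k+1$ jobs $a_1,\dots,a_k$ with $(p,d)=(k,2k)$, $b_1,\dots,b_k$ with $(p,d)=(1,k+1)$, and $c_1,\dots,c_{k+1}$ with $(p,d)=(k+1,2k+1)$, in the fixed order $a_1,b_1,a_2,b_2,\dots,a_k,b_k,c_1,c_2,\dots,c_{k+1}$ (all jobs have slack $k$), so that $\sup_I FF(I)/OPT(I)=2$ on this class.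
   Context: Fixed order scheduling with deadlines: there are jobs $J=\{1,\dots,n\}$, each job $j$ having a processing time $p_j\in\mathbb{N}$, $p_j>0$, and a deadline $d_j\in\mathbb{N}$ with $d_j\ge p_j$; the slack of job $j$ is $d_j-p_j$. All jobs are released at time $0$; job $j$ precedes job $k$ in the fixed order iff $j<k$. A schedule $\tau:J\to\{1,\dots,n\}$ assigns jobs to identical machines; each machine processes its jobs in the fixed order from time $0$ without idle time or preemption, so job $j$ completes at $\sum_{k\le j,\tau(k)=\tau(j)}p_k$; it is feasible if every job completes by its deadline. $OPT(I)$ is the minimum number of machines used by a feasible schedule. First-fit (FF): machines indexed $1,2,\dots$; process jobs in the fixed order and assign each job $j$ to the smallest-index machine whose current load (sum of processing times already assigned) plus $p_j$ is at most $d_j$; $FF(I)$ is the number of nonempty machines. Next-fit (NF): assign job $j$ to the most recently opened machine if it fits there, otherwise to a new machine. *)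

theory Defs
  imports Complex_Main
begin

text \<open>An instance is a list of jobs (p_j, d_j), in the fixed order; job j is I ! j
  (0-indexed). Processing time fst, deadline snd.\<close>

type_synonym inst = "(nat \<times> nat) list"

definition valid_instance :: "inst \<Rightarrow> bool" where
  "valid_instance I \<longleftrightarrow> (\<forall>j < length I. 0 < fst (I ! j) \<and> fst (I ! j) \<le> snd (I ! j))"

definition slack :: "inst \<Rightarrow> nat \<Rightarrow> nat" where
  "slack I j = snd (I ! j) - fst (I ! j)"

definition slack_nonincreasing :: "inst \<Rightarrow> bool" where
  "slack_nonincreasing I \<longleftrightarrow> (\<forall>i j. i \<le> j \<and> j < length I \<longrightarrow> slack I j \<le> slack I i)"

text \<open>Schedule tau: jobs {0..<n} to machines {1..n}; completion time of job j.\<close>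

definition completion :: "inst \<Rightarrow> (nat \<Rightarrow> nat) \<Rightarrow> nat \<Rightarrow> nat" where
  "completion I \<tau> j = (\<Sum>k\<in>{k. k \<le> j \<and> \<tau> k = \<tau> j}. fst (I ! k))"

definition feasible :: "inst \<Rightarrow> (nat \<Rightarrow> nat) \<Rightarrow> bool" where
  "feasible I \<tau> \<longleftrightarrow> (\<forall>j < length I. \<tau> j \<in> {1..length I} \<and> completion I \<tau> j \<le> snd (I ! j))"

definition OPT :: "inst \<Rightarrow> nat" where
  "OPT I = (LEAST m. \<exists>\<tau>. feasible I \<tau> \<and> card (\<tau> ` {..<length I}) = m)"

text \<open>First-fit: list of machine loads (index 0 = machine 1).\<close>

definition ff_step :: "nat list \<Rightarrow> nat \<times> nat \<Rightarrow> nat list" where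
  "ff_step ls pd = (let p = fst pd; d = snd pd in
     if (\<exists>i < length ls. ls ! i + p \<le> d)
     then (let i = (LEAST i. i < length ls \<and> ls ! i + p \<le> d) in ls[i := ls ! i + p])
     else ls @ [p])"

definition FF :: "inst \<Rightarrow> nat" where
  "FF I = length (foldl ff_step [] I)"

definition nf_step :: "nat list \<Rightarrow> nat \<times> nat \<Rightarrow> nat list" where
  "nf_step ls pd = (let p = fst pd; d = snd pd in
     if ls \<noteq> [] \<and> last ls + p \<le> d then butlast ls @ [last ls + p] else ls @ [p])"

definition NF :: "inst \<Rightarrow> nat" where
  "NF I = length (foldl nf_step [] I)"

definition tight_instance :: "nat \<Rightarrow> inst" where
  "tight_instance k =
     concat (map (\<lambda>_. [(k, 2*k), (1, k+1)]) [0..<k]) @ replicate (k+1) (k+1, 2*k+1)"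

end

theory Submission
  imports Defs
begin

text \<open>With nonincreasing slacks, a bin of next-fit that has been closed is too full for every later
  job: the job opening the next bin did not fit, and no later job has a larger slack. So first-fit
  never goes back to an old bin and coincides with next-fit.

  For the bound fix an optimal schedule with k machines. At most k bins of next-fit contain a job
  that is last on its machine; call the other bins free. For a free bin y, the job opening bin y + 1
  has slack a_y smaller than the load of bin y. On each machine, the jobs lying in free bins precede
  a later job of that machine in a higher bin, so their total length is at most a_y for the highest
  free bin y they use. Comparing these bounds with the loads of the free bins above every given
  free bin shows that there are fewer free bins than machines, hence FF \<le> 2k - 1.\<close>

lemma tail_sums_less_merge:
  fixes a :: "nat \<Rightarrow> nat" and i :: "'m \<Rightarrow> nat"
  assumes "finite N" "finite A" "x0 \<in> N" "x \<le> x1" "x1 < x0" "a x0 \<le> a x1" "M0 \<in> A" "i M0 = x0"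
    and "(\<Sum>y\<in>{y\<in>N. x \<le> y}. a y) < (\<Sum>M\<in>{M\<in>A. x \<le> i M}. a (i M))"
  defines "i' \<equiv> \<lambda>M. if i M = x0 then x1 else i M"
  shows "(\<Sum>y\<in>{y\<in>N - {x0}. x \<le> y}. a y) < (\<Sum>M\<in>{M\<in>A - {M0}. x \<le> i' M}. a (i' M))"
proof -
  have "{y\<in>N. x \<le> y} = insert x0 {y\<in>N - {x0}. x \<le> y}"
    using assms(3-5) by auto
  then have lhs: "(\<Sum>y\<in>{y\<in>N. x \<le> y}. a y) = a x0 + (\<Sum>y\<in>{y\<in>N - {x0}. x \<le> y}. a y)"
    using assms(1) by simp
  have "{M\<in>A. x \<le> i M} = insert M0 {M\<in>A - {M0}. x \<le> i M}"
    using assms(4,5,7,8) by auto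
  then have rhs: "(\<Sum>M\<in>{M\<in>A. x \<le> i M}. a (i M)) = a x0 + (\<Sum>M\<in>{M\<in>A - {M0}. x \<le> i M}. a (i M))"
    using assms(2,8) by simp
  have "{M\<in>A - {M0}. x \<le> i M} = {M\<in>A - {M0}. x \<le> i' M}"
    using assms(4,5) by (auto simp: i'_def)
  moreover have "a (i M) \<le> a (i' M)" for M
    using assms(6) by (simp add: i'_def)
  ultimately have "(\<Sum>M\<in>{M\<in>A - {M0}. x \<le> i M}. a (i M)) \<le> (\<Sum>M\<in>{M\<in>A - {M0}. x \<le> i' M}. a (i' M))"
    by (simp add: sum_mono)
  then show ?thesis
    using assms(9) lhs rhs by linarith
qed

text \<open>Induction on card N: the top element x0 is the label of at least two members of A; drop one
  of them and relabel the others to the next element x1.\<close>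

lemma card_less_card_if_tail_sums_less:
  fixes N :: "nat set" and A :: "'m set" and i :: "'m \<Rightarrow> nat" and a :: "nat \<Rightarrow> nat"
  assumes "finite N" "N \<noteq> {}" "finite A" "i ` A \<subseteq> N"
    and "\<And>x y. x \<in> N \<Longrightarrow> y \<in> N \<Longrightarrow> x \<le> y \<Longrightarrow> a y \<le> a x"
    and "\<And>x. x \<in> N \<Longrightarrow> (\<Sum>y\<in>{y\<in>N. x \<le> y}. a y) < (\<Sum>M\<in>{M\<in>A. x \<le> i M}. a (i M))"
  shows "card N < card A"
  using assms
proof (induction "card N" arbitrary: N A i rule: less_induct)
  case less
  define x0 where "x0 = Max N"
  have x0: "x0 \<in> N" "\<And>y. y \<in> N \<Longrightarrow> y \<le> x0"
    using less.prems by (auto simp: x0_def)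
  define B where "B = {M\<in>A. i M = x0}"
  have "{y\<in>N. x0 \<le> y} = {x0}" and "{M\<in>A. x0 \<le> i M} = B"
    using x0 less.prems(4) by (force simp: B_def)+
  then have "a x0 < card B * a x0"
    using less.prems(6)[OF x0(1)] by (simp add: B_def)
  then have "2 \<le> card B"
    by (cases "card B") (auto simp: numeral_2_eq_2 Suc_le_eq)
  then have "B \<noteq> {}"
    by auto
  then obtain M0 where M0: "M0 \<in> A" "i M0 = x0"
    by (auto simp: B_def)
  show ?case
  proof (cases "N = {x0}")
    case True
    have "card B \<le> card A"
      using less.prems(3) by (intro card_mono) (auto simp: B_def)
    then show ?thesis
      using True \<open>2 \<le> card B\<close> by simp
  next
    case False
    define x1 where "x1 = Max (N - {x0})"
    have fin: "finite (N - {x0})" and ne: "N - {x0} \<noteq> {}"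
      using False x0 less.prems(1) by auto
    have x1: "x1 \<in> N - {x0}" "\<And>y. y \<in> N - {x0} \<Longrightarrow> y \<le> x1"
      using Max_in[OF fin ne] Max_ge[OF fin] by (simp_all add: x1_def)
    then have "x1 < x0"
      using x0 by force
    define i' where "i' M = (if i M = x0 then x1 else i M)" for M
    have "card (N - {x0}) < card (A - {M0})"
    proof (rule less.hyps)
      show "card (N - {x0}) < card N"
        using less.prems(1) x0(1) by (rule card_Diff1_less)
      show "i' ` (A - {M0}) \<subseteq> N - {x0}"
        using less.prems(4) x1(1) by (auto simp: i'_def)
      show "a y \<le> a x" if "x \<in> N - {x0}" "y \<in> N - {x0}" "x \<le> y" for x y
        using less.prems(5) that by simp
      show "(\<Sum>y\<in>{y\<in>N - {x0}. x \<le> y}. a y) < (\<Sum>M\<in>{M\<in>A - {M0}. x \<le> i' M}. a (i' M))"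
        if "x \<in> N - {x0}" for x
        unfolding i'_def using less.prems(1,3) x0(1) x1 \<open>x1 < x0\<close> that M0 less.prems(5,6)
        by (intro tail_sums_less_merge) auto
    qed (use fin ne less.prems(3) in auto)
    then show ?thesis
      using M0(1) x0(1) less.prems(1,3) by simp
  qed
qed

definition nf_run :: "inst \<Rightarrow> nat \<Rightarrow> nat list" where
  "nf_run I r = foldl nf_step [] (take r I)"

text \<open>Bins are numbered from 0 here, whereas schedules use machines 1, 2, \<dots>\<close>

definition nf_bin :: "inst \<Rightarrow> nat \<Rightarrow> nat" where
  "nf_bin I t = length (nf_run I (Suc t)) - 1"

lemma nf_run_0 [simp]: "nf_run I 0 = []"
  by (simp add: nf_run_def)

lemma nf_run_Suc: "r < length I \<Longrightarrow> nf_run I (Suc r) = nf_step (nf_run I r) (I ! r)"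
  by (simp add: nf_run_def take_Suc_conv_app_nth)

lemma nf_run_length: "nf_run I (length I) = foldl nf_step [] I"
  by (simp add: nf_run_def)

lemma NF_eq_length_nf_run: "NF I = length (nf_run I (length I))"
  by (simp add: NF_def nf_run_length)

lemma length_nf_step:
  "length (nf_step ls pd) = (if ls \<noteq> [] \<and> last ls + fst pd \<le> snd pd then length ls else Suc (length ls))"
  by (simp add: nf_step_def Let_def)

lemma nf_run_Suc_not_Nil: "r < length I \<Longrightarrow> nf_run I (Suc r) \<noteq> []"
  by (simp add: nf_run_Suc nf_step_def Let_def)

lemma length_nf_run_Suc_cases:
  "length (nf_run I (Suc r)) = length (nf_run I r) \<or> length (nf_run I (Suc r)) = Suc (length (nf_run I r))"
proof (cases "r < length I")
  case False
  then show ?thesis by (simp add: nf_run_def)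
qed (simp add: nf_run_Suc length_nf_step)

lemma length_nf_run_Suc_le: "length (nf_run I (Suc r)) \<le> Suc (length (nf_run I r))"
  using length_nf_run_Suc_cases[of I r] by auto

lemma length_nf_run_mono: "r \<le> r' \<Longrightarrow> length (nf_run I r) \<le> length (nf_run I r')"
proof (induction r' rule: dec_induct)
  case (step r')
  then show ?case
    using length_nf_run_Suc_cases[of I r'] by auto
qed simp

lemma length_nf_run_Suc: "t < length I \<Longrightarrow> length (nf_run I (Suc t)) = Suc (nf_bin I t)"
  using nf_run_Suc_not_Nil[of t I] by (simp add: nf_bin_def)

lemma nf_bin_0: "I \<noteq> [] \<Longrightarrow> nf_bin I 0 = 0"
  by (simp add: nf_bin_def nf_run_Suc nf_step_def Let_def)

lemma nf_bin_mono: "t \<le> t' \<Longrightarrow> nf_bin I t \<le> nf_bin I t'"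
  unfolding nf_bin_def using length_nf_run_mono[of "Suc t" "Suc t'" I] by simp

lemma nf_bin_Suc_le: "nf_bin I (Suc t) \<le> Suc (nf_bin I t)"
  unfolding nf_bin_def using length_nf_run_Suc_le[of I "Suc t"] by simp

lemma nf_bin_less_length: "t < r \<Longrightarrow> t < length I \<Longrightarrow> nf_bin I t < length (nf_run I r)"
  using length_nf_run_Suc[of t I] length_nf_run_mono[of "Suc t" r I] by simp

lemma NF_eq_Suc_nf_bin_last: "I \<noteq> [] \<Longrightarrow> NF I = Suc (nf_bin I (length I - 1))"
  using length_nf_run_Suc[of "length I - 1" I] by (simp add: NF_eq_length_nf_run)

lemma nf_bin_attains: "y \<le> nf_bin I t \<Longrightarrow> I \<noteq> [] \<Longrightarrow> \<exists>s\<le>t. nf_bin I s = y"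
proof (induction t)
  case 0
  then show ?case by (simp add: nf_bin_0)
next
  case (Suc t)
  show ?case
  proof (cases "y \<le> nf_bin I t")
    case True
    then show ?thesis using Suc by (meson le_SucI)
  next
    case False
    then have "nf_bin I (Suc t) = y"
      using Suc.prems(1) nf_bin_Suc_le[of I t] by simp
    then show ?thesis by blast
  qed
qed

lemma nf_run_Suc_nth:
  assumes "r < length I" "y < length (nf_run I (Suc r))"
  shows "nf_run I (Suc r) ! y = (if y < length (nf_run I r) then nf_run I r ! y else 0)
    + (if nf_bin I r = y then fst (I ! r) else 0)"
  using assms length_nf_run_Suc[OF assms(1)]
  by (auto simp: nf_run_Suc nf_step_def Let_def nth_append nth_butlast last_conv_nth)

lemma nf_run_nth:
  "r \<le> length I \<Longrightarrow> y < length (nf_run I r) \<Longrightarrow>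
    nf_run I r ! y = (\<Sum>t<r. if nf_bin I t = y then fst (I ! t) else 0)"
proof (induction r arbitrary: y)
  case (Suc r)
  have "(\<Sum>t<r. if nf_bin I t = y then fst (I ! t) else 0) = 0" if "\<not> y < length (nf_run I r)"
    using that nf_bin_less_length[of _ r I] Suc.prems(1) by (intro sum.neutral) force
  then show ?case
    using Suc nf_run_Suc_nth[of r I y] by simp
qed simp

lemma nf_run_nth_eq_final:
  assumes "r < length I" "y < nf_bin I r"
  shows "nf_run I r ! y = nf_run I (length I) ! y"
proof -
  have "y < length (nf_run I r)"
    using assms length_nf_run_Suc_le[of I r] by (simp add: nf_bin_def)
  moreover have "(if nf_bin I s = y then fst (I ! s) else 0) = 0" if "s \<in> {..<length I} - {..<r}" for s
    using that assms(2) nf_bin_mono[of r s I] by auto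
  ultimately show ?thesis
    using assms(1) length_nf_run_mono[of r "length I" I]
    by (simp add: nf_run_nth sum.mono_neutral_right[of "{..<length I}" "{..<r}"])
qed

definition nf_opener :: "inst \<Rightarrow> nat \<Rightarrow> nat" where
  "nf_opener I y = (LEAST t. t < length I \<and> nf_bin I t = Suc y)"

lemma nf_opener:
  assumes "v < length I" "y < nf_bin I v"
  shows "nf_opener I y \<le> v" "nf_bin I (nf_opener I y) = Suc y"
    and "0 < nf_opener I y" "nf_bin I (nf_opener I y - 1) = y"
proof -
  have nonempty: "I \<noteq> []"
    using assms(1) by auto
  then obtain s where s: "s \<le> v" "nf_bin I s = Suc y"
    using assms(2) nf_bin_attains[of "Suc y" I v] by auto
  then have "s < length I \<and> nf_bin I s = Suc y"
    using assms(1) by simp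
  then have opens: "nf_opener I y < length I" "nf_bin I (nf_opener I y) = Suc y" "nf_opener I y \<le> s"
    unfolding nf_opener_def by (metis (mono_tags, lifting) LeastI_ex Least_le)+
  then show "nf_opener I y \<le> v" "nf_bin I (nf_opener I y) = Suc y"
    using s by simp_all
  show pos: "0 < nf_opener I y"
    using opens(2) nf_bin_0[OF nonempty] by (cases "nf_opener I y") auto
  have "nf_bin I (nf_opener I y - 1) \<noteq> Suc y"
    using not_less_Least[of "nf_opener I y - 1" "\<lambda>t. t < length I \<and> nf_bin I t = Suc y"] pos opens(1)
    by (simp add: nf_opener_def)
  then show "nf_bin I (nf_opener I y - 1) = y"
    using nf_bin_mono[of "nf_opener I y - 1" "nf_opener I y" I] nf_bin_Suc_le[of I "nf_opener I y - 1"] pos opens(2)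
    by simp
qed

lemma slack_le_slack_nf_opener:
  assumes "slack_nonincreasing I" "v < length I" "y < nf_bin I v"
  shows "slack I v \<le> slack I (nf_opener I y)"
  using assms nf_opener(1)[OF assms(2,3)] by (simp add: slack_nonincreasing_def)

lemma slack_nf_opener_less_load:
  assumes "valid_instance I" "v < length I" "y < nf_bin I v"
  shows "slack I (nf_opener I y) < nf_run I (length I) ! y"
proof -
  define t where "t = nf_opener I y - 1"
  have t: "Suc t = nf_opener I y" "Suc t < length I" "nf_bin I (Suc t) = Suc y" "nf_bin I t = y"
    using nf_opener[OF assms(2,3)] assms(2) by (simp_all add: t_def)
  define ls where "ls = nf_run I (Suc t)"
  have "length ls = Suc y" "length (nf_step ls (I ! Suc t)) = Suc (Suc y)"
    using t length_nf_run_Suc[of t I] length_nf_run_Suc[of "Suc t" I] by (simp_all add: ls_def nf_run_Suc)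
  then have "snd (I ! Suc t) < last ls + fst (I ! Suc t)" "last ls = ls ! y"
    by (auto simp: length_nf_step split: if_splits) (cases ls rule: rev_cases; simp add: nth_append)
  moreover have "ls ! y = nf_run I (length I) ! y"
    using nf_run_nth_eq_final[of "Suc t" I y] t by (simp add: ls_def)
  moreover have "fst (I ! Suc t) \<le> snd (I ! Suc t)"
    using assms(1) t(2) by (simp add: valid_instance_def)
  ultimately show ?thesis
    using t(1) by (simp add: slack_def)
qed

lemma ff_step_eq_nf_step:
  assumes "\<And>i. Suc i < length ls \<Longrightarrow> snd pd < ls ! i + fst pd"
  shows "ff_step ls pd = nf_step ls pd"
proof (cases "ls \<noteq> [] \<and> last ls + fst pd \<le> snd pd")
  case True
  then obtain xs x where ls: "ls = xs @ [x]"
    by (cases ls rule: rev_cases) auto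
  have "(LEAST i. i < length ls \<and> ls ! i + fst pd \<le> snd pd) = length xs"
  proof (intro Least_equality)
    fix j
    assume "j < length ls \<and> ls ! j + fst pd \<le> snd pd"
    then show "length xs \<le> j"
      using assms[of j] ls by (cases "Suc j < length ls") auto
  qed (use True ls in simp)
  moreover have "\<exists>i<length ls. ls ! i + fst pd \<le> snd pd"
    using True ls by (intro exI[of _ "length xs"]) simp
  ultimately show ?thesis
    using True by (simp add: ff_step_def nf_step_def Let_def ls)
next
  case False
  have "\<not> ls ! i + fst pd \<le> snd pd" if "i < length ls" for i
  proof (cases "Suc i < length ls")
    case False
    then have "ls ! i = last ls" "ls \<noteq> []"
      using that by (cases ls rule: rev_cases; auto simp: nth_append)+
    then show ?thesis
      using \<open>\<not> (ls \<noteq> [] \<and> last ls + fst pd \<le> snd pd)\<close> by simp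
  qed (use assms in force)
  then have "(\<exists>i<length ls. ls ! i + fst pd \<le> snd pd) = False"
    by blast
  then show ?thesis
    using False unfolding ff_step_def nf_step_def Let_def by (simp only: if_False)
qed

lemma nf_run_nth_gt_slack:
  assumes "valid_instance I" "slack_nonincreasing I" "r < length I" "Suc i < length (nf_run I r)"
  shows "slack I r < nf_run I r ! i"
proof -
  have "0 < r"
    using assms(4) by (cases r) auto
  then have "i < nf_bin I r"
    using assms(3,4) length_nf_run_Suc[of "r - 1" I] nf_bin_mono[of "r - 1" r I] by simp
  have "slack I r \<le> slack I (nf_opener I i)"
    using assms(2,3) \<open>i < nf_bin I r\<close> by (rule slack_le_slack_nf_opener)
  also have "\<dots> < nf_run I (length I) ! i"
    using assms(1,3) \<open>i < nf_bin I r\<close> by (rule slack_nf_opener_less_load)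
  also have "\<dots> = nf_run I r ! i"
    using assms(3) \<open>i < nf_bin I r\<close> by (rule nf_run_nth_eq_final[symmetric])
  finally show ?thesis .
qed

theorem NF_eq_FF:
  assumes "valid_instance I" "slack_nonincreasing I"
  shows "NF I = FF I"
proof -
  have "foldl ff_step [] (take r I) = nf_run I r" if "r \<le> length I" for r
    using that
  proof (induction r)
    case (Suc r)
    have r: "r < length I"
      using Suc.prems by simp
    have "snd (I ! r) < nf_run I r ! i + fst (I ! r)" if "Suc i < length (nf_run I r)" for i
      using nf_run_nth_gt_slack[OF assms r that] assms(1) r by (simp add: slack_def valid_instance_def)
    then have "ff_step (nf_run I r) (I ! r) = nf_step (nf_run I r) (I ! r)"
      by (rule ff_step_eq_nf_step)
    then show ?case
      using Suc by (simp add: take_Suc_conv_app_nth nf_run_Suc)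
  qed (simp add: nf_run_def)
  from this[of "length I"] show ?thesis
    by (simp add: NF_def FF_def nf_run_length)
qed

lemma feasible_load_before_le_slack:
  assumes "feasible I \<tau>" "v < length I"
  shows "(\<Sum>t | t < v \<and> \<tau> t = \<tau> v. fst (I ! t)) \<le> slack I v"
proof -
  have "{t. t \<le> v \<and> \<tau> t = \<tau> v} = insert v {t. t < v \<and> \<tau> t = \<tau> v}"
    by auto
  then have "completion I \<tau> v = (\<Sum>t | t < v \<and> \<tau> t = \<tau> v. fst (I ! t)) + fst (I ! v)"
    by (simp add: completion_def)
  moreover have "completion I \<tau> v \<le> snd (I ! v)"
    using assms by (simp add: feasible_def)
  ultimately show ?thesis
    by (simp add: slack_def)
qed

locale nf_vs_schedule =
  fixes I :: inst and \<tau> :: "nat \<Rightarrow> nat"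
  assumes valid: "valid_instance I"
    and slack_antimono: "slack_nonincreasing I"
    and feasible: "feasible I \<tau>"
    and nonempty: "I \<noteq> []"
begin

definition last_on_machine :: "nat set" where
  "last_on_machine = {t. t < length I \<and> (\<forall>t'. t < t' \<and> t' < length I \<longrightarrow> \<tau> t' \<noteq> \<tau> t)}"

definition free_bins :: "nat set" where
  "free_bins = {..<NF I} - nf_bin I ` last_on_machine"

definition free_jobs :: "nat \<Rightarrow> nat set" where
  "free_jobs M = {t. t < length I \<and> \<tau> t = M \<and> nf_bin I t \<in> free_bins}"

definition machines_with_free_jobs :: "nat set" where
  "machines_with_free_jobs = {M. free_jobs M \<noteq> {}}"

definition top_free_bin :: "nat \<Rightarrow> nat" where
  "top_free_bin M = nf_bin I (Max (free_jobs M))"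

lemma finite_last_on_machine: "finite last_on_machine"
  by (simp add: last_on_machine_def)

lemma card_bins_of_last_jobs_le: "card (nf_bin I ` last_on_machine) \<le> card (\<tau> ` {..<length I})"
proof -
  have "inj_on \<tau> last_on_machine"
  proof (rule inj_onI)
    fix x y
    assume "x \<in> last_on_machine" "y \<in> last_on_machine" "\<tau> x = \<tau> y"
    then show "x = y"
      by (cases x y rule: linorder_cases) (auto simp: last_on_machine_def)
  qed
  then have "card (nf_bin I ` last_on_machine) \<le> card (\<tau> ` last_on_machine)"
    using card_image_le[OF finite_last_on_machine] by (simp add: card_image)
  also have "\<dots> \<le> card (\<tau> ` {..<length I})"
    by (intro card_mono) (auto simp: last_on_machine_def)
  finally show ?thesis .
qed

lemma NF_le_card_machines_plus_free_bins: "NF I \<le> card (\<tau> ` {..<length I}) + card free_bins"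
proof -
  have "card {..<NF I} \<le> card (nf_bin I ` last_on_machine) + card free_bins"
    by (rule order.trans[OF card_mono card_Un_le]) (auto simp: free_bins_def finite_last_on_machine)
  then show ?thesis
    using card_bins_of_last_jobs_le by simp
qed

lemma free_bin_less_last_bin: "y \<in> free_bins \<Longrightarrow> y < nf_bin I (length I - 1)"
proof -
  assume y: "y \<in> free_bins"
  have "length I - 1 \<in> last_on_machine"
    using nonempty by (auto simp: last_on_machine_def)
  then have "y \<noteq> nf_bin I (length I - 1)" "y < NF I"
    using y by (auto simp: free_bins_def)
  then show ?thesis
    using NF_eq_Suc_nf_bin_last[OF nonempty] by simp
qed

lemma slack_nf_opener_less_free_load: "y \<in> free_bins \<Longrightarrow> slack I (nf_opener I y) < nf_run I (length I) ! y"
  using nonempty free_bin_less_last_bin by (intro slack_nf_opener_less_load[OF valid, of "length I - 1"]) auto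

lemma slack_nf_opener_antimono:
  assumes "x \<in> free_bins" "y \<in> free_bins" "x \<le> y"
  shows "slack I (nf_opener I y) \<le> slack I (nf_opener I x)"
proof -
  have "y < nf_bin I (length I - 1)" "length I - 1 < length I"
    using assms(2) free_bin_less_last_bin nonempty by auto
  then have "nf_opener I y < length I" "nf_bin I (nf_opener I y) = Suc y"
    using nf_opener(1,2) by (fastforce, blast)
  then show ?thesis
    using assms(3) by (intro slack_le_slack_nf_opener slack_antimono) auto
qed

lemma finite_free_jobs: "finite (free_jobs M)"
  by (simp add: free_jobs_def)

lemma machines_with_free_jobs_subset: "machines_with_free_jobs \<subseteq> \<tau> ` {..<length I}"
  by (auto simp: machines_with_free_jobs_def free_jobs_def)

lemma top_free_bin:
  assumes "M \<in> machines_with_free_jobs"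
  shows "top_free_bin M \<in> free_bins" "\<And>t. t \<in> free_jobs M \<Longrightarrow> nf_bin I t \<le> top_free_bin M"
proof -
  have "Max (free_jobs M) \<in> free_jobs M"
    using assms finite_free_jobs by (auto simp: machines_with_free_jobs_def)
  then show "top_free_bin M \<in> free_bins"
    by (simp add: top_free_bin_def free_jobs_def)
  show "nf_bin I t \<le> top_free_bin M" if "t \<in> free_jobs M" for t
    unfolding top_free_bin_def using that finite_free_jobs by (intro nf_bin_mono Max_ge)
qed

lemma later_job_on_machine:
  assumes "M \<in> machines_with_free_jobs"
  obtains v where "v < length I" "\<tau> v = M" "free_jobs M \<subseteq> {t. t < v \<and> \<tau> t = M}"
    and "top_free_bin M < nf_bin I v"
proof -
  define u where "u = Max (free_jobs M)"
  have u: "u \<in> free_jobs M" "\<And>t. t \<in> free_jobs M \<Longrightarrow> t \<le> u"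
    using assms finite_free_jobs by (auto simp: u_def machines_with_free_jobs_def)
  then have "u \<notin> last_on_machine"
    by (auto simp: free_jobs_def free_bins_def)
  then obtain v where v: "u < v" "v < length I" "\<tau> v = M"
    using u(1) by (auto simp: last_on_machine_def free_jobs_def)
  moreover have "free_jobs M \<subseteq> {t. t < v \<and> \<tau> t = M}"
    using u(2) v(1) by (force simp: free_jobs_def)
  moreover have "nf_bin I u \<noteq> nf_bin I v"
    using u v by (force simp: free_jobs_def)
  then have "top_free_bin M < nf_bin I v"
    using nf_bin_mono[of u v I] v(1) by (simp add: top_free_bin_def u_def)
  ultimately show ?thesis
    using that by blast
qed

lemma free_jobs_load_le_slack:
  assumes "M \<in> machines_with_free_jobs"
  shows "(\<Sum>t\<in>free_jobs M. fst (I ! t)) \<le> slack I (nf_opener I (top_free_bin M))"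
proof -
  obtain v where v: "v < length I" "\<tau> v = M" "free_jobs M \<subseteq> {t. t < v \<and> \<tau> t = M}"
    and top: "top_free_bin M < nf_bin I v"
    using assms by (rule later_job_on_machine)
  have "(\<Sum>t\<in>free_jobs M. fst (I ! t)) \<le> (\<Sum>t | t < v \<and> \<tau> t = \<tau> v. fst (I ! t))"
    using v by (intro sum_mono2) auto
  also have "\<dots> \<le> slack I v"
    using feasible v(1) by (rule feasible_load_before_le_slack)
  also have "\<dots> \<le> slack I (nf_opener I (top_free_bin M))"
    using slack_antimono v(1) top by (rule slack_le_slack_nf_opener)
  finally show ?thesis .
qed

lemma free_jobs_tail_load_le:
  assumes "M \<in> machines_with_free_jobs" "\<And>y. y \<in> Y \<Longrightarrow> x \<le> y"
  shows "(\<Sum>t | t \<in> free_jobs M \<and> nf_bin I t \<in> Y. fst (I ! t))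
    \<le> (if x \<le> top_free_bin M then slack I (nf_opener I (top_free_bin M)) else 0)"
proof (cases "x \<le> top_free_bin M")
  case True
  have "(\<Sum>t | t \<in> free_jobs M \<and> nf_bin I t \<in> Y. fst (I ! t)) \<le> (\<Sum>t\<in>free_jobs M. fst (I ! t))"
    using finite_free_jobs by (intro sum_mono2) auto
  then show ?thesis
    using True free_jobs_load_le_slack[OF assms(1)] by simp
next
  case False
  have "{t. t \<in> free_jobs M \<and> nf_bin I t \<in> Y} = {}"
    using False assms top_free_bin(2)[OF assms(1)] by fastforce
  then have "(\<Sum>t | t \<in> free_jobs M \<and> nf_bin I t \<in> Y. fst (I ! t)) = 0"
    by (simp only: sum.empty)
  then show ?thesis
    by (simp add: False)
qed

lemma finite_free_bins: "finite free_bins"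
  by (simp add: free_bins_def)

lemma finite_machines_with_free_jobs: "finite machines_with_free_jobs"
  using machines_with_free_jobs_subset by (rule finite_subset) simp

lemma sum_free_loads_by_machine:
  assumes "Y \<subseteq> free_bins"
  shows "(\<Sum>y\<in>Y. nf_run I (length I) ! y)
    = (\<Sum>M\<in>machines_with_free_jobs. \<Sum>t | t \<in> free_jobs M \<and> nf_bin I t \<in> Y. fst (I ! t))"
proof -
  define T where "T = {t\<in>{..<length I}. nf_bin I t \<in> Y}"
  have "finite Y"
    using assms finite_free_bins by (rule finite_subset)
  have "(\<Sum>y\<in>Y. nf_run I (length I) ! y) = (\<Sum>y\<in>Y. \<Sum>t<length I. if nf_bin I t = y then fst (I ! t) else 0)"
    using assms by (intro sum.cong refl nf_run_nth) (auto simp: free_bins_def NF_eq_length_nf_run)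
  also have "\<dots> = (\<Sum>t<length I. if nf_bin I t \<in> Y then fst (I ! t) else 0)"
    using \<open>finite Y\<close> by (subst sum.swap) simp
  also have "\<dots> = (\<Sum>t\<in>T. fst (I ! t))"
    unfolding T_def by (rule sum.inter_filter[symmetric]) simp
  also have "\<dots> = (\<Sum>M\<in>machines_with_free_jobs. \<Sum>t | t \<in> T \<and> \<tau> t = M. fst (I ! t))"
    using assms finite_machines_with_free_jobs
    by (intro sum.group[symmetric]) (auto simp: T_def machines_with_free_jobs_def free_jobs_def)
  also have "\<dots> = (\<Sum>M\<in>machines_with_free_jobs. \<Sum>t | t \<in> free_jobs M \<and> nf_bin I t \<in> Y. fst (I ! t))"
    using assms by (intro sum.cong refl arg_cong[where f = "\<lambda>A. sum _ A"]) (auto simp: T_def free_jobs_def)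
  finally show ?thesis .
qed

lemma tail_sums_less:
  assumes "x \<in> free_bins"
  shows "(\<Sum>y\<in>{y\<in>free_bins. x \<le> y}. slack I (nf_opener I y))
    < (\<Sum>M\<in>{M\<in>machines_with_free_jobs. x \<le> top_free_bin M}. slack I (nf_opener I (top_free_bin M)))"
proof -
  define Y where "Y = {y\<in>free_bins. x \<le> y}"
  have "(\<Sum>y\<in>Y. slack I (nf_opener I y)) < (\<Sum>y\<in>Y. nf_run I (length I) ! y)"
    using assms finite_free_bins slack_nf_opener_less_free_load by (intro sum_strict_mono) (auto simp: Y_def)
  also have "\<dots> = (\<Sum>M\<in>machines_with_free_jobs. \<Sum>t | t \<in> free_jobs M \<and> nf_bin I t \<in> Y. fst (I ! t))"
    by (rule sum_free_loads_by_machine) (simp add: Y_def)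
  also have "\<dots> \<le> (\<Sum>M\<in>machines_with_free_jobs.
      if x \<le> top_free_bin M then slack I (nf_opener I (top_free_bin M)) else 0)"
    using free_jobs_tail_load_le[of _ Y x] by (intro sum_mono) (simp add: Y_def)
  also have "\<dots> = (\<Sum>M\<in>{M\<in>machines_with_free_jobs. x \<le> top_free_bin M}. slack I (nf_opener I (top_free_bin M)))"
    using finite_machines_with_free_jobs by (simp add: sum.inter_filter)
  finally show ?thesis
    by (simp add: Y_def)
qed

lemma card_free_bins_less:
  assumes "free_bins \<noteq> {}"
  shows "card free_bins < card machines_with_free_jobs"
  by (rule card_less_card_if_tail_sums_less[OF finite_free_bins assms finite_machines_with_free_jobs _
        slack_nf_opener_antimono tail_sums_less])
    (use top_free_bin(1) in blast)

theorem NF_bound: "NF I + 1 \<le> 2 * card (\<tau> ` {..<length I})"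
proof (cases "free_bins = {}")
  case True
  have "\<tau> 0 \<in> \<tau> ` {..<length I}"
    using nonempty by simp
  then have "0 < card (\<tau> ` {..<length I})"
    by (auto simp: card_gt_0_iff)
  then show ?thesis
    using True NF_le_card_machines_plus_free_bins by simp
next
  case False
  have "card machines_with_free_jobs \<le> card (\<tau> ` {..<length I})"
    using machines_with_free_jobs_subset by (intro card_mono) simp_all
  then show ?thesis
    using card_free_bins_less[OF False] NF_le_card_machines_plus_free_bins by simp
qed

end

lemma feasible_Suc: "valid_instance I \<Longrightarrow> feasible I Suc"
proof -
  have "{k. k \<le> j \<and> Suc k = Suc j} = {j}" for j :: nat
    by auto
  then show "valid_instance I \<Longrightarrow> feasible I Suc"
    by (auto simp: feasible_def completion_def valid_instance_def)
qed

lemma OPT_attained: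
  assumes "valid_instance I"
  obtains \<tau> where "feasible I \<tau>" "card (\<tau> ` {..<length I}) = OPT I"
proof -
  have "\<exists>m \<tau>. feasible I \<tau> \<and> card (\<tau> ` {..<length I}) = m"
    using feasible_Suc[OF assms] by blast
  then have "\<exists>\<tau>. feasible I \<tau> \<and> card (\<tau> ` {..<length I}) = OPT I"
    unfolding OPT_def by (rule LeastI_ex)
  then show ?thesis
    using that by blast
qed

lemma OPT_le: "feasible I \<tau> \<Longrightarrow> OPT I \<le> card (\<tau> ` {..<length I})"
  unfolding OPT_def by (rule Least_le) blast

lemma OPT_Nil: "OPT [] = 0"
  using OPT_le[of "[]" Suc] by (simp add: feasible_def)

theorem FF_plus_one_le_twice_OPT:
  assumes "valid_instance I" "slack_nonincreasing I" "I \<noteq> []"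
  shows "FF I + 1 \<le> 2 * OPT I"
proof -
  obtain \<tau> where \<tau>: "feasible I \<tau>" "card (\<tau> ` {..<length I}) = OPT I"
    using assms(1) by (rule OPT_attained)
  then interpret nf_vs_schedule I \<tau>
    using assms by unfold_locales
  show ?thesis
    using NF_bound NF_eq_FF[OF assms(1,2)] \<tau>(2) by simp
qed

corollary FF_approximation:
  assumes "valid_instance I" "slack_nonincreasing I"
  shows "2 \<le> OPT I \<Longrightarrow> FF I < 2 * OPT I" and "OPT I = 1 \<Longrightarrow> FF I = 1"
proof -
  assume "2 \<le> OPT I"
  then have "I \<noteq> []"
    using OPT_Nil by auto
  then show "FF I < 2 * OPT I"
    using FF_plus_one_le_twice_OPT[OF assms] by simp
next
  assume "OPT I = 1"
  then have "I \<noteq> []"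
    using OPT_Nil by auto
  then show "FF I = 1"
    using FF_plus_one_le_twice_OPT[OF assms] NF_eq_FF[OF assms] NF_eq_Suc_nf_bin_last \<open>OPT I = 1\<close>
    by fastforce
qed

lemma FF_div_OPT_le_2:
  assumes "valid_instance I" "slack_nonincreasing I"
  shows "real (FF I) / real (OPT I) \<le> 2"
proof (cases "OPT I \<le> 1")
  case True
  then show ?thesis
    using FF_approximation(2)[OF assms] by (cases "OPT I") auto
next
  case False
  then show ?thesis
    using FF_approximation(1)[OF assms] by (simp add: divide_le_eq)
qed

lemma concat_replicate_pair:
  "concat (map (\<lambda>_. [x, y]) [0..<r]) = map (\<lambda>t. if even t then x else y) [0..<2 * r]"
  by (induction r) auto

lemma length_tight_instance: "length (tight_instance k) = 3 * k + 1"
  by (simp add: tight_instance_def concat_replicate_pair)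

lemma nth_tight_instance:
  "t < 3 * k + 1 \<Longrightarrow> tight_instance k ! t =
    (if t < 2 * k then if even t then (k, 2 * k) else (1, k + 1) else (k + 1, 2 * k + 1))"
  by (auto simp: tight_instance_def concat_replicate_pair nth_append simp del: replicate.simps)

lemma slack_tight_instance: "t < length (tight_instance k) \<Longrightarrow> slack (tight_instance k) t = k"
  by (simp add: slack_def nth_tight_instance length_tight_instance)

lemma valid_tight_instance: "1 \<le> k \<Longrightarrow> valid_instance (tight_instance k)"
  by (simp add: valid_instance_def nth_tight_instance length_tight_instance)

lemma slack_nonincreasing_tight_instance: "slack_nonincreasing (tight_instance k)"
  by (simp add: slack_nonincreasing_def slack_tight_instance)

lemma NF_tight_instance:
  assumes "1 \<le> k"
  shows "NF (tight_instance k) = 2 * k + 1"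
proof -
  have pairs: "foldl nf_step [] (concat (map (\<lambda>_. [(k, 2 * k), (1, k + 1)]) [0..<r])) = replicate r (k + 1)"
    for r
  proof (induction r)
    case (Suc r)
    have "foldl nf_step [] (concat (map (\<lambda>_. [(k, 2 * k), (1, k + 1)]) [0..<Suc r]))
      = nf_step (nf_step (replicate r (k + 1)) (k, 2 * k)) (1, k + 1)"
      using Suc.IH by simp
    also have "nf_step (replicate r (k + 1)) (k, 2 * k) = replicate r (k + 1) @ [k]"
      using assms by (cases r) (auto simp: nf_step_def Let_def)
    also have "nf_step (replicate r (k + 1) @ [k]) (1, k + 1) = replicate (Suc r) (k + 1)"
      by (simp add: nf_step_def Let_def replicate_append_same)
    finally show ?case .
  qed simp
  have cs: "foldl nf_step (replicate r (k + 1)) (replicate j (k + 1, 2 * k + 1)) = replicate (r + j) (k + 1)"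
    if "1 \<le> r" for r j
    using that
  proof (induction j arbitrary: r)
    case (Suc j)
    then have "nf_step (replicate r (k + 1)) (k + 1, 2 * k + 1) = replicate (Suc r) (k + 1)"
      by (cases r) (auto simp: nf_step_def Let_def replicate_append_same)
    then show ?case
      using Suc.IH[of "Suc r"] by simp
  qed simp
  show ?thesis
    using pairs[of k] cs[of k "k + 1"] assms by (simp add: NF_def tight_instance_def)
qed

text \<open>Machine i \<le> k runs a_i and then c_i; machine k + 1 runs all b-jobs and then c_(k+1).\<close>

definition tight_schedule :: "nat \<Rightarrow> nat \<Rightarrow> nat" where
  "tight_schedule k t =
    (if t < 2 * k then if even t then t div 2 + 1 else k + 1
     else if t < 3 * k then t - 2 * k + 1 else k + 1)"

lemma card_odd_less_double: "card {t. t < 2 * k \<and> odd t} = k"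
proof -
  have "{t. t < 2 * k \<and> odd t} = (\<lambda>i. 2 * i + 1) ` {..<k}"
    by (auto elim!: oddE)
  then show ?thesis
    by (simp add: card_image inj_on_def)
qed

lemma completion_le_sum:
  "finite S \<Longrightarrow> {t. t \<le> j \<and> \<tau> t = \<tau> j} \<subseteq> S \<Longrightarrow> completion I \<tau> j \<le> (\<Sum>t\<in>S. fst (I ! t))"
  unfolding completion_def by (rule sum_mono2) auto

lemma tight_schedule_feasible:
  assumes "1 \<le> k"
  shows "feasible (tight_instance k) (tight_schedule k)"
  unfolding feasible_def
proof (intro allI impI conjI)
  let ?I = "tight_instance k" and ?\<tau> = "tight_schedule k"
  fix j
  assume "j < length ?I"
  then have j: "j < 3 * k + 1"
    by (simp add: length_tight_instance)
  then show "?\<tau> j \<in> {1..length ?I}"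
    by (auto simp: tight_schedule_def length_tight_instance)
  have p: "fst (?I ! t) = (if t < 2 * k then if even t then k else 1 else k + 1)" if "t \<le> 3 * k" for t
    using that by (simp add: nth_tight_instance)
  have odd_jobs: "(\<Sum>t | t < 2 * k \<and> odd t. fst (?I ! t)) = k"
  proof -
    have "(\<Sum>t | t < 2 * k \<and> odd t. fst (?I ! t)) = (\<Sum>t | t < 2 * k \<and> odd t. 1)"
      using p by (intro sum.cong) auto
    then show ?thesis
      using card_odd_less_double[of k] by simp
  qed
  consider "j < 2 * k" "even j" | "j < 2 * k" "odd j" | "2 * k \<le> j" "j < 3 * k" | "j = 3 * k"
    using j by linarith
  then show "completion ?I ?\<tau> j \<le> snd (?I ! j)"
  proof cases
    case 1
    then have "{t. t \<le> j \<and> ?\<tau> t = ?\<tau> j} \<subseteq> {j}"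
      by (auto simp: tight_schedule_def split: if_splits elim!: evenE)
    then have "completion ?I ?\<tau> j \<le> (\<Sum>t\<in>{j}. fst (?I ! t))"
      by (intro completion_le_sum) auto
    then show ?thesis
      using 1 j by (simp add: nth_tight_instance)
  next
    case 2
    then have "{t. t \<le> j \<and> ?\<tau> t = ?\<tau> j} \<subseteq> {t. t < 2 * k \<and> odd t}"
      by (auto simp: tight_schedule_def split: if_splits)
    then have "completion ?I ?\<tau> j \<le> (\<Sum>t | t < 2 * k \<and> odd t. fst (?I ! t))"
      by (intro completion_le_sum) auto
    then show ?thesis
      using 2 j odd_jobs by (simp add: nth_tight_instance)
  next
    case 3
    then have "{t. t \<le> j \<and> ?\<tau> t = ?\<tau> j} \<subseteq> {2 * (j - 2 * k), j}"
      by (auto simp: tight_schedule_def split: if_splits elim!: evenE)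
    moreover have "(\<Sum>t\<in>{2 * (j - 2 * k), j}. fst (?I ! t)) = 2 * k + 1"
      using 3 p by simp
    ultimately show ?thesis
      using 3 j completion_le_sum[of "{2 * (j - 2 * k), j}" j ?\<tau> ?I] by (simp add: nth_tight_instance)
  next
    case 4
    then have "{t. t \<le> j \<and> ?\<tau> t = ?\<tau> j} \<subseteq> insert j {t. t < 2 * k \<and> odd t}"
      by (auto simp: tight_schedule_def split: if_splits)
    moreover have "(\<Sum>t\<in>insert j {t. t < 2 * k \<and> odd t}. fst (?I ! t)) = 2 * k + 1"
      using 4 p odd_jobs by simp
    ultimately show ?thesis
      using 4 j completion_le_sum[of "insert j {t. t < 2 * k \<and> odd t}" j ?\<tau> ?I] by (simp add: nth_tight_instance)
  qed
qed

lemma OPT_tight_instance: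
  assumes "1 \<le> k"
  shows "OPT (tight_instance k) = k + 1"
proof (rule antisym)
  have "OPT (tight_instance k) \<le> card (tight_schedule k ` {..<length (tight_instance k)})"
    using tight_schedule_feasible[OF assms] by (rule OPT_le)
  also have "\<dots> \<le> card {1..k + 1}"
    by (intro card_mono) (auto simp: tight_schedule_def length_tight_instance)
  finally show "OPT (tight_instance k) \<le> k + 1"
    by simp
next
  have "FF (tight_instance k) = 2 * k + 1"
    using NF_tight_instance[OF assms] NF_eq_FF[OF valid_tight_instance[OF assms] slack_nonincreasing_tight_instance]
    by simp
  moreover have "tight_instance k \<noteq> []"
    by (simp add: tight_instance_def)
  ultimately show "k + 1 \<le> OPT (tight_instance k)"
    using FF_plus_one_le_twice_OPT[OF valid_tight_instance[OF assms] slack_nonincreasing_tight_instance] by simp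
qed

lemma FF_tight_instance:
  "1 \<le> k \<Longrightarrow> FF (tight_instance k) = 2 * k + 1"
  using NF_tight_instance NF_eq_FF[OF valid_tight_instance slack_nonincreasing_tight_instance] by simp

lemma FF_div_OPT_tight_instance:
  "real (FF (tight_instance (Suc n))) / real (OPT (tight_instance (Suc n))) = 2 - inverse (real (n + 2))"
  using FF_tight_instance[of "Suc n"] OPT_tight_instance[of "Suc n"] by (simp add: field_simps)

lemma Sup_FF_div_OPT:
  "Sup {real (FF I) / real (OPT I) :: real | I. valid_instance I \<and> slack_nonincreasing I} = 2"
proof (rule cSup_eq_non_empty)
  show "{real (FF I) / real (OPT I) :: real | I. valid_instance I \<and> slack_nonincreasing I} \<noteq> {}"
    using valid_tight_instance[of 1] slack_nonincreasing_tight_instance by blast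
  show "x \<le> 2" if "x \<in> {real (FF I) / real (OPT I) :: real | I. valid_instance I \<and> slack_nonincreasing I}" for x
    using that FF_div_OPT_le_2 by auto
next
  fix y
  assume ub: "\<And>x. x \<in> {real (FF I) / real (OPT I) :: real | I. valid_instance I \<and> slack_nonincreasing I} \<Longrightarrow> x \<le> y"
  have tight: "2 - inverse (real (n + 2)) \<le> y" for n
    unfolding FF_div_OPT_tight_instance[symmetric]
    using valid_tight_instance[of "Suc n"] slack_nonincreasing_tight_instance by (intro ub) auto
  show "2 \<le> y"
  proof (rule ccontr)
    assume "\<not> 2 \<le> y"
    then obtain n where n: "inverse (real (Suc n)) < 2 - y"
      using reals_Archimedean[of "2 - y"] by auto
    have "inverse (real (n + 2)) \<le> inverse (real (Suc n))"
      by (simp add: le_imp_inverse_le)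
    then show False
      using n tight[of n] by linarith
  qed
qed

theorem mainTheorem5:
  shows "(\<forall>I. valid_instance I \<and> slack_nonincreasing I \<longrightarrow>
            NF I = FF I \<and>
            (OPT I \<ge> 2 \<longrightarrow> FF I < 2 * OPT I) \<and>
            (OPT I = 1 \<longrightarrow> FF I = 1))
      \<and> (\<forall>k::nat. k \<ge> 1 \<longrightarrow>
            valid_instance (tight_instance k) \<and> slack_nonincreasing (tight_instance k) \<and>
            length (tight_instance k) = 3*k+1 \<and>
            (\<forall>j < length (tight_instance k). slack (tight_instance k) j = k) \<and>
            OPT (tight_instance k) = k+1 \<and> FF (tight_instance k) = 2*k+1)
      \<and> Sup {real (FF I) / real (OPT I) :: real | I. valid_instance I \<and> slack_nonincreasing I} = 2"
proof (intro conjI allI impI)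
  fix I
  assume "valid_instance I \<and> slack_nonincreasing I"
  then show "NF I = FF I" "2 \<le> OPT I \<Longrightarrow> FF I < 2 * OPT I" "OPT I = 1 \<Longrightarrow> FF I = 1"
    using NF_eq_FF FF_approximation by blast+
next
  fix k :: nat
  assume "1 \<le> k"
  then show "valid_instance (tight_instance k)" "slack_nonincreasing (tight_instance k)"
    and "length (tight_instance k) = 3 * k + 1"
    and "\<And>j. j < length (tight_instance k) \<Longrightarrow> slack (tight_instance k) j = k"
    and "OPT (tight_instance k) = k + 1" "FF (tight_instance k) = 2 * k + 1"
    by (simp_all add: valid_tight_instance slack_nonincreasing_tight_instance length_tight_instance
        slack_tight_instance OPT_tight_instance FF_tight_instance)
qed (rule Sup_FF_div_OPT)

end
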